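(* Let $\mathbf A\in\mathbb R^{m\times n}$, $\mathbf b\in\mathbb R^m$, $\sigma\ge 0$, and let $\mathbf x^0\in\mathbb R^n$ be an arbitrary vector with $\|\mathbf A\mathbf x^0-\mathbf b\|_2\le\sigma$. Let $\mathcal S$ be the set of indices of the $k$ largest components of $\mathbf x^0$ in magnitude and $\mathcal Z=\{1,\dots,n\}\setminus\mathcal S$. Let $\alpha>\|\mathbf x^0_{\mathcal Z}\|_\infty$ and let $\mathbf x^*$ be the solution of problem (P3). Then $\mathbf h:=\mathbf x^*-\mathbf x^0$ satisfies $$\|\mathbf h_{\mathcal Z}\|_1\le C_3\|\mathbf h_{\mathcal S}\|_1+C_4\|\mathbf x^0_{\mathcal Z}\|_1,\qquad C_3:=\frac{\alpha+\|\mathbf x^0_{\mathcal S}\|_\infty}{\alpha-\|\mathbf x^0_{\mathcal Z}\|_\infty},\quad C_4:=\frac{2\alpha}{\alpha-\|\mathbf x^0_{\mathcal Z}\|_\infty}.$$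
   Context: Problem (P3) is $\min_{\mathbf x\in\mathbb R^n}\{\|\mathbf x\|_1+\frac{1}{2\alpha}\|\mathbf x\|_2^2:\ \|\mathbf A\mathbf x-\mathbf b\|_2\le\sigma\}$ (its solution is unique by strict convexity). For a vector $\mathbf h$ and index set $\mathcal S$, $\mathbf h_{\mathcal S}$ denotes the restriction of $\mathbf h$ to the coordinates in $\mathcal S$. *)

theory Defs
  imports "HOL-Analysis.Analysis"
begin

definition l1_on :: "'n::finite set \<Rightarrow> real^'n \<Rightarrow> real" where
  "l1_on S x = (\<Sum>i\<in>S. \<bar>x $ i\<bar>)"

definition linf_on :: "'n::finite set \<Rightarrow> real^'n \<Rightarrow> real" where
  "linf_on S x = Max (insert 0 ((\<lambda>i. \<bar>x $ i\<bar>) ` S))"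

definition P3_obj :: "real \<Rightarrow> real^'n::finite \<Rightarrow> real" where
  "P3_obj \<alpha> x = l1_on UNIV x + (norm x)\<^sup>2 / (2 * \<alpha>)"

definition P3_solution ::
  "real^'n::finite^'m::finite \<Rightarrow> real^'m \<Rightarrow> real \<Rightarrow> real \<Rightarrow> real^'n \<Rightarrow> bool" where
  "P3_solution A b \<sigma> \<alpha> x \<longleftrightarrow>
     norm (A *v x - b) \<le> \<sigma> \<and>
     (\<forall>y. norm (A *v y - b) \<le> \<sigma> \<longrightarrow> P3_obj \<alpha> x \<le> P3_obj \<alpha> y)"

definition largest_k_support :: "nat \<Rightarrow> real^'n::finite \<Rightarrow> 'n set \<Rightarrow> bool" where
  "largest_k_support k x S \<longleftrightarrow> card S = k \<and>
     (\<forall>i\<in>S. \<forall>j\<in>UNIV - S. \<bar>x $ j\<bar> \<le> \<bar>x $ i\<bar>)"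

end

theory Submission
  imports Defs
begin

(* Write h = xs - x0.  Since x0 is feasible and xs is optimal,
   P3_obj xs <= P3_obj x0.  Multiplying the objective difference by alpha gives
     alpha * (P3_obj (x0 + h) - P3_obj x0)
       = (SUM i. alpha * (|x0_i + h_i| - |x0_i|) + x0_i * h_i) + ||h||^2 / 2,
   so the coordinatewise increments sum to at most 0.  On an index i with
   |x0_i| <= L each increment is at least -(alpha + L)|h_i|, and also at least
   (alpha - L)|h_i| - 2 alpha |x0_i|.  Using the first bound on S and the
   second on its complement Z gives the cone inequality
     (alpha - ||x0_Z||_inf) ||h_Z||_1 <= (alpha + ||x0_S||_inf) ||h_S||_1
                                          + 2 alpha ||x0_Z||_1,
   valid for every index set S; dividing by alpha - ||x0_Z||_inf > 0 yields
   the theorem.  The choice of S as the k largest entries is not needed. *)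

lemma abs_le_linf_on: "i \<in> S \<Longrightarrow> \<bar>x $ i\<bar> \<le> linf_on S x"
  unfolding linf_on_def by (rule Max_ge) auto

lemma linf_on_nonneg: "0 \<le> linf_on S x"
  unfolding linf_on_def by (rule Max_ge) auto

lemma norm_sq_vec: "(norm (x::real^'n))\<^sup>2 = (\<Sum>i\<in>UNIV. (x $ i)\<^sup>2)"
  unfolding power2_norm_eq_inner inner_vec_def by (simp add: power2_eq_square)

(* alpha times the first-order change of the P3 objective in one coordinate,
   when the entry a is moved to a + t. *)
definition increment :: "real \<Rightarrow> real \<Rightarrow> real \<Rightarrow> real" where
  "increment \<alpha> a t = \<alpha> * (\<bar>a + t\<bar> - \<bar>a\<bar>) + a * t"

lemma P3_obj_increment:
  fixes x h :: "real^'n::finite"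
  assumes "\<alpha> \<noteq> 0"
  shows "\<alpha> * (P3_obj \<alpha> (x + h) - P3_obj \<alpha> x)
           = (\<Sum>i\<in>UNIV. increment \<alpha> (x $ i) (h $ i)) + (norm h)\<^sup>2 / 2"
proof -
  have coord: "\<alpha> * ((\<bar>x$i + h$i\<bar> + (x$i + h$i)\<^sup>2 / (2*\<alpha>)) - (\<bar>x$i\<bar> + (x$i)\<^sup>2 / (2*\<alpha>)))
      = increment \<alpha> (x$i) (h$i) + (h$i)\<^sup>2 / 2" for i
    using assms unfolding increment_def by (simp add: field_simps power2_eq_square)
  have "\<alpha> * (P3_obj \<alpha> (x + h) - P3_obj \<alpha> x)
      = (\<Sum>i\<in>UNIV. \<alpha> * ((\<bar>x$i + h$i\<bar> + (x$i + h$i)\<^sup>2 / (2*\<alpha>))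
                          - (\<bar>x$i\<bar> + (x$i)\<^sup>2 / (2*\<alpha>))))"
    unfolding P3_obj_def l1_on_def norm_sq_vec
    by (simp add: sum.distrib sum_divide_distrib sum_subtractf sum_distrib_left algebra_simps)
  also have "\<dots> = (\<Sum>i\<in>UNIV. increment \<alpha> (x$i) (h$i)) + (\<Sum>i\<in>UNIV. (h$i)\<^sup>2) / 2"
    unfolding coord by (simp add: sum.distrib sum_divide_distrib)
  finally show ?thesis by (simp add: norm_sq_vec)
qed

lemma increment_ge_support:
  assumes "\<bar>a\<bar> \<le> L" "\<alpha> \<ge> 0"
  shows "increment \<alpha> a t \<ge> - (\<alpha> + L) * \<bar>t\<bar>"
proof -
  have "\<bar>a * t\<bar> \<le> L * \<bar>t\<bar>" unfolding abs_mult by (rule mult_right_mono) (use assms in auto)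
  moreover have "\<alpha> * (\<bar>a + t\<bar> - \<bar>a\<bar>) \<ge> \<alpha> * (- \<bar>t\<bar>)"
    by (rule mult_left_mono) (use assms in auto)
  ultimately show ?thesis unfolding increment_def by (simp add: algebra_simps)
qed

lemma increment_ge_offsupport:
  assumes "\<bar>a\<bar> \<le> L" "\<alpha> \<ge> 0"
  shows "increment \<alpha> a t \<ge> (\<alpha> - L) * \<bar>t\<bar> - 2 * \<alpha> * \<bar>a\<bar>"
proof -
  have "\<bar>a * t\<bar> \<le> L * \<bar>t\<bar>" unfolding abs_mult by (rule mult_right_mono) (use assms in auto)
  moreover have "\<alpha> * (\<bar>a + t\<bar> - \<bar>a\<bar>) \<ge> \<alpha> * (\<bar>t\<bar> - 2 * \<bar>a\<bar>)"
    by (rule mult_left_mono) (use assms in auto)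
  ultimately show ?thesis unfolding increment_def by (simp add: algebra_simps)
qed

lemma cone_inequality:
  fixes x h :: "real^'n::finite" and S :: "'n set"
  assumes "\<alpha> > 0" and "P3_obj \<alpha> (x + h) \<le> P3_obj \<alpha> x"
  shows "(\<alpha> - linf_on (UNIV - S) x) * l1_on (UNIV - S) h
           \<le> (\<alpha> + linf_on S x) * l1_on S h + 2 * \<alpha> * l1_on (UNIV - S) x"
proof -
  define d where "d i = increment \<alpha> (x $ i) (h $ i)" for i
  have "\<alpha> * (P3_obj \<alpha> (x + h) - P3_obj \<alpha> x) \<le> 0"
    using assms by (intro mult_nonneg_nonpos) auto
  hence "(\<Sum>i\<in>UNIV. d i) \<le> 0"
    unfolding P3_obj_increment[OF less_imp_neq[OF assms(1), symmetric]] d_def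
    using zero_le_power2[of "norm h"] by linarith
  moreover have "(\<Sum>i\<in>UNIV. d i) = (\<Sum>i\<in>S. d i) + (\<Sum>i\<in>UNIV - S. d i)"
    by (metis add.commute finite sum.subset_diff top_greatest)
  ultimately have total: "(\<Sum>i\<in>S. d i) + (\<Sum>i\<in>UNIV - S. d i) \<le> 0" by simp
  have on_S: "- (\<alpha> + linf_on S x) * l1_on S h \<le> (\<Sum>i\<in>S. d i)"
  proof -
    have "(\<Sum>i\<in>S. - (\<alpha> + linf_on S x) * \<bar>h $ i\<bar>) \<le> (\<Sum>i\<in>S. d i)"
      unfolding d_def using assms(1)
      by (intro sum_mono increment_ge_support abs_le_linf_on) auto
    thus ?thesis unfolding l1_on_def by (simp add: sum_distrib_left)
  qed
  have off_S: "(\<alpha> - linf_on (UNIV - S) x) * l1_on (UNIV - S) h - 2 * \<alpha> * l1_on (UNIV - S) x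
                 \<le> (\<Sum>i\<in>UNIV - S. d i)"
  proof -
    have "(\<Sum>i\<in>UNIV - S. (\<alpha> - linf_on (UNIV - S) x) * \<bar>h $ i\<bar> - 2 * \<alpha> * \<bar>x $ i\<bar>)
            \<le> (\<Sum>i\<in>UNIV - S. d i)"
      unfolding d_def using assms(1)
      by (intro sum_mono increment_ge_offsupport abs_le_linf_on) auto
    thus ?thesis unfolding l1_on_def by (simp add: sum_subtractf sum_distrib_left)
  qed
  show ?thesis using total on_S off_S by linarith
qed

lemma P3_solution_le_feasible:
  assumes "P3_solution A b \<sigma> \<alpha> xs" "norm (A *v x0 - b) \<le> \<sigma>"
  shows "P3_obj \<alpha> xs \<le> P3_obj \<alpha> x0"
  using assms unfolding P3_solution_def by blast

theorem mainTheorem3: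
  fixes A :: "real^'n::finite^'m::finite" and b :: "real^'m"
    and \<sigma> \<alpha> :: real and x0 xs :: "real^'n" and k :: nat and S :: "'n set"
  assumes "\<sigma> \<ge> 0"
    and "norm (A *v x0 - b) \<le> \<sigma>"
    and "largest_k_support k x0 S"
    and "\<alpha> > linf_on (UNIV - S) x0"
    and "P3_solution A b \<sigma> \<alpha> xs"
  shows "l1_on (UNIV - S) (xs - x0) \<le>
           (\<alpha> + linf_on S x0) / (\<alpha> - linf_on (UNIV - S) x0) * l1_on S (xs - x0)
         + (2 * \<alpha>) / (\<alpha> - linf_on (UNIV - S) x0) * l1_on (UNIV - S) x0"
proof -
  define gap where "gap = \<alpha> - linf_on (UNIV - S) x0"
  have gap_pos: "gap > 0" using assms(4) unfolding gap_def by simp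
  have "\<alpha> > 0" using assms(4) linf_on_nonneg[of "UNIV - S" x0] by linarith
  moreover have "P3_obj \<alpha> (x0 + (xs - x0)) \<le> P3_obj \<alpha> x0"
    using P3_solution_le_feasible[OF assms(5,2)] by simp
  ultimately have "gap * l1_on (UNIV - S) (xs - x0)
      \<le> (\<alpha> + linf_on S x0) * l1_on S (xs - x0) + 2 * \<alpha> * l1_on (UNIV - S) x0"
    unfolding gap_def by (rule cone_inequality)
  hence "l1_on (UNIV - S) (xs - x0)
      \<le> ((\<alpha> + linf_on S x0) * l1_on S (xs - x0) + 2 * \<alpha> * l1_on (UNIV - S) x0) / gap"
    using gap_pos by (simp add: pos_le_divide_eq mult.commute)
  thus ?thesis unfolding gap_def by (metis add_divide_distrib times_divide_eq_left)
qed

end
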